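(* Let $d\ge1$, $M>0$, and suppose $\mu_K=\mathbf{0}\in\mathbb{R}^d$ and $\mu_H=\mathbf{1}\in\mathbb{R}^d$. Let $C_M=[-M,M]^{2d+2}$, in which the parameter vector $(\beta_K,\beta_H,\alpha_K,\alpha_H)\in\mathbb{R}^d\times\mathbb{R}^d\times\mathbb{R}\times\mathbb{R}$ ranges. Let $I_2\sim\text{Irwin–Hall}(2)$ and $J_{2d}\sim\text{Irwin–Hall}(2d)$ be independent. Then the fraction (by Lebesgue volume) of $C_M$ on which the unexplained components $U^{(H)}=\mu_K^\top\Delta\beta+\Delta\alpha$ and $U^{(K)}=\mu_H^\top\Delta\beta+\Delta\alpha$ have strictly opposite signs equals $$P_d:=\Pr\big(\{I_2>1\}\cap\{J_{2d}<d+1-I_2\}\big)+\Pr\big(\{I_2<1\}\cap\{J_{2d}>d+1-I_2\}\big),$$ which is independent of $M$. Moreover $P_d\to 1/2$ as $d\to\infty$.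
   Context: Oaxaca–Blinder setting: two groups $H,K$ with $\mathbb{E}_g[Y\mid X]=\alpha_g+X^\top\beta_g$, $\mu_g=\mathbb{E}_g[X]$, $\Delta\beta=\beta_H-\beta_K$, $\Delta\alpha=\alpha_H-\alpha_K$. The Irwin–Hall$(n)$ distribution is the law of the sum of $n$ independent Uniform$(0,1)$ random variables. *)

theory Defs
  imports "HOL-Probability.Probability"
begin

definition irwin_hall :: "nat \<Rightarrow> real measure" where
  "irwin_hall n = distr (PiM {..<n} (\<lambda>_. uniform_measure lborel {0..1::real})) borel
                        (\<lambda>u. \<Sum>i<n. u i)"

definition lebesgue_R :: "nat \<Rightarrow> (nat \<Rightarrow> real) measure" where
  "lebesgue_R n = PiM {..<n} (\<lambda>_. lborel)"

definition betaK :: "nat \<Rightarrow> (nat \<Rightarrow> real) \<Rightarrow> nat \<Rightarrow> real" where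
  "betaK d x i = x i"
definition betaH :: "nat \<Rightarrow> (nat \<Rightarrow> real) \<Rightarrow> nat \<Rightarrow> real" where
  "betaH d x i = x (d + i)"
definition alphaK :: "nat \<Rightarrow> (nat \<Rightarrow> real) \<Rightarrow> real" where
  "alphaK d x = x (2 * d)"
definition alphaH :: "nat \<Rightarrow> (nat \<Rightarrow> real) \<Rightarrow> real" where
  "alphaH d x = x (2 * d + 1)"

definition muK :: "nat \<Rightarrow> real" where "muK i = 0"
definition muH :: "nat \<Rightarrow> real" where "muH i = 1"

definition U_H :: "nat \<Rightarrow> (nat \<Rightarrow> real) \<Rightarrow> real" where
  "U_H d x = (\<Sum>i<d. muK i * (betaH d x i - betaK d x i)) + (alphaH d x - alphaK d x)"
definition U_K :: "nat \<Rightarrow> (nat \<Rightarrow> real) \<Rightarrow> real" where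
  "U_K d x = (\<Sum>i<d. muH i * (betaH d x i - betaK d x i)) + (alphaH d x - alphaK d x)"

definition cube_CM :: "nat \<Rightarrow> real \<Rightarrow> (nat \<Rightarrow> real) set" where
  "cube_CM d M = PiE {..<2 * d + 2} (\<lambda>_. {-M..M})"

definition opposite_sign_set :: "nat \<Rightarrow> real \<Rightarrow> (nat \<Rightarrow> real) set" where
  "opposite_sign_set d M = {x \<in> cube_CM d M.
      (U_H d x < 0 \<and> U_K d x > 0) \<or> (U_H d x > 0 \<and> U_K d x < 0)}"

definition P_d :: "nat \<Rightarrow> real" where
  "P_d d = measure (irwin_hall 2 \<Otimes>\<^sub>M irwin_hall (2 * d))
              {p. fst p > 1 \<and> snd p < real d + 1 - fst p}
         + measure (irwin_hall 2 \<Otimes>\<^sub>M irwin_hall (2 * d))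
              {p. fst p < 1 \<and> snd p > real d + 1 - fst p}"

end

theory Submission
  imports Defs
begin

(* Rescale the cube C_M affinely onto [0,1]^(2d+2), reflecting the K-coordinates. Then
  1 + U^(H)/(2M) becomes the sum I of the two alpha-coordinates and d + (U^(K) - U^(H))/(2M)
  the sum J of the 2d beta-coordinates, so (I, J) is an independent Irwin-Hall(2),
  Irwin-Hall(2d) pair, and U^(H), U^(K) have opposite signs exactly when I > 1, J < d + 1 - I
  or I < 1, J > d + 1 - I.  For the limit: I is symmetric about 1 without atoms, so by
  independence P(I > 1, J < d) + P(I < 1, J > d) = 1/2; the events defining P_d differ from
  these only where |J - d| <= 1, and that probability tends to 0 by the central limit
  theorem, J having standard deviation sqrt(d/6). *)

section \<open>Uniform measures and their products\<close>

abbreviation uniform01 :: "real measure" where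
  "uniform01 \<equiv> uniform_measure lborel {0..1}"

lemma prob_space_uniform01: "prob_space uniform01"
  by (intro prob_space_uniform_measure) auto

lemma emeasure_lborel_affine_vimage:
  fixes p q :: real
  assumes "q \<noteq> 0" and [measurable]: "S \<in> sets borel"
  shows "emeasure lborel S = ennreal \<bar>q\<bar> * emeasure lborel ((\<lambda>x. p + q * x) -` S)"
proof -
  have "emeasure lborel S
      = emeasure (density (distr lborel borel (\<lambda>x. p + q * x)) (\<lambda>_. ennreal \<bar>q\<bar>)) S"
    using lborel_real_affine[OF \<open>q \<noteq> 0\<close>] by simp
  also have "\<dots> = ennreal \<bar>q\<bar> * emeasure (distr lborel borel (\<lambda>x. p + q * x)) S"
    by (simp add: emeasure_density nn_integral_cmult_indicator)
  also have "\<dots> = ennreal \<bar>q\<bar> * emeasure lborel ((\<lambda>x. p + q * x) -` S)"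
    by (subst emeasure_distr) auto
  finally show ?thesis .
qed

lemma distr_uniform_measure_affine:
  fixes a b p q :: real
  assumes "a < b" and q: "q \<noteq> 0" and img: "(\<lambda>x. p + q * x) ` {a..b} = {0..1}"
    and len: "\<bar>q\<bar> * (b - a) = 1"
  shows "distr (uniform_measure lborel {a..b}) uniform01 (\<lambda>x. p + q * x) = uniform01"
proof (rule measure_eqI)
  let ?h = "\<lambda>x. p + q * x"
  fix B assume "B \<in> sets (distr (uniform_measure lborel {a..b}) uniform01 ?h)"
  then have B[measurable]: "B \<in> sets borel" by simp
  have "inj ?h" using q by (auto intro: injI)
  then have vimage: "{a..b} \<inter> ?h -` B = ?h -` ({0..1} \<inter> B)"
    unfolding img[symmetric] by (auto dest: injD)
  have inv_len: "inverse (ennreal (b - a)) = ennreal \<bar>q\<bar>"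
    using \<open>a < b\<close> len by (subst inverse_ennreal) (auto simp: field_simps)
  have [measurable]: "?h -` B \<in> sets borel"
    by (rule measurable_sets_borel[OF _ B]) simp
  have "emeasure (distr (uniform_measure lborel {a..b}) uniform01 ?h) B
      = emeasure lborel ({a..b} \<inter> ?h -` B) / emeasure lborel {a..b}"
    by (subst emeasure_distr) auto
  also have "\<dots> = emeasure lborel (?h -` ({0..1} \<inter> B)) * ennreal \<bar>q\<bar>"
    using \<open>a < b\<close> by (simp add: vimage divide_ennreal_def inv_len)
  also have "\<dots> = emeasure uniform01 B"
    using emeasure_lborel_affine_vimage[OF q, of "{0..1} \<inter> B" p]
    by (simp add: mult.commute divide_ennreal_def)
  finally show "emeasure (distr (uniform_measure lborel {a..b}) uniform01 ?h) B
      = emeasure uniform01 B" .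
qed simp

lemma distr_PiM_componentwise:
  assumes "finite I" and "prob_space A" and "prob_space B"
    and f: "\<And>i. i \<in> I \<Longrightarrow> f i \<in> measurable A B"
    and f_distr: "\<And>i. i \<in> I \<Longrightarrow> distr A B (f i) = B"
  shows "distr (PiM I (\<lambda>_. A)) (PiM I (\<lambda>_. B)) (\<lambda>x. \<lambda>i\<in>I. f i (x i)) = PiM I (\<lambda>_. B)"
proof -
  interpret PA: product_prob_space "\<lambda>_. A" by (rule product_prob_spaceI) fact
  interpret PB: product_prob_space "\<lambda>_. B" by (rule product_prob_spaceI) fact
  let ?F = "\<lambda>x. \<lambda>i\<in>I. f i (x i)"
  have meas: "?F \<in> measurable (PiM I (\<lambda>_. A)) (PiM I (\<lambda>_. B))"
  proof (rule measurable_restrict)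
    fix i assume "i \<in> I"
    then show "(\<lambda>x. f i (x i)) \<in> measurable (PiM I (\<lambda>_. A)) B"
      using f by (intro measurable_compose[OF measurable_component_singleton]) auto
  qed
  show ?thesis
  proof (rule PB.PiM_eqI[OF \<open>finite I\<close>])
    fix C assume C: "\<And>i. i \<in> I \<Longrightarrow> C i \<in> sets B"
    have "?F -` PiE I C \<inter> space (PiM I (\<lambda>_. A)) = PiE I (\<lambda>i. f i -` C i \<inter> space A)"
      by (auto simp: space_PiM PiE_def Pi_def extensional_def)
    then have "emeasure (distr (PiM I (\<lambda>_. A)) (PiM I (\<lambda>_. B)) ?F) (PiE I C)
        = emeasure (PiM I (\<lambda>_. A)) (PiE I (\<lambda>i. f i -` C i \<inter> space A))"
      using C \<open>finite I\<close> by (subst emeasure_distr[OF meas]) (auto intro!: sets_PiM_I_finite)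
    also have "\<dots> = (\<Prod>i\<in>I. emeasure A (f i -` C i \<inter> space A))"
      using C f by (intro PA.emeasure_PiM \<open>finite I\<close>) (auto intro: measurable_sets)
    also have "\<dots> = (\<Prod>i\<in>I. emeasure (distr A B (f i)) (C i))"
      using C f by (intro prod.cong refl emeasure_distr[symmetric]) auto
    finally show "emeasure (distr (PiM I (\<lambda>_. A)) (PiM I (\<lambda>_. B)) ?F) (PiE I C)
        = (\<Prod>i\<in>I. emeasure B (C i))"
      using f_distr by simp
  qed simp
qed

lemma uniform_measure_PiE_const:
  fixes S :: "real set"
  assumes "finite I" and [measurable]: "S \<in> sets borel"
    and S_pos: "emeasure lborel S \<noteq> 0" and S_fin: "emeasure lborel S \<noteq> \<infinity>"
  shows "uniform_measure (PiM I (\<lambda>_. lborel)) (PiE I (\<lambda>_. S))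
      = PiM I (\<lambda>_. uniform_measure lborel S)"
proof -
  interpret PU: product_prob_space "\<lambda>_. uniform_measure lborel S"
    using S_pos S_fin by (intro product_prob_spaceI prob_space_uniform_measure) auto
  interpret PL: product_sigma_finite "\<lambda>_. lborel :: real measure" ..
  let ?m = "emeasure lborel S"
  show ?thesis
  proof (rule PU.PiM_eqI[OF \<open>finite I\<close>])
    fix A assume "\<And>i. i \<in> I \<Longrightarrow> A i \<in> sets (uniform_measure lborel S)"
    then have A: "\<And>i. i \<in> I \<Longrightarrow> A i \<in> sets borel" by simp
    have box: "PiE I (\<lambda>_. S) \<in> sets (PiM I (\<lambda>_. lborel))" "PiE I A \<in> sets (PiM I (\<lambda>_. lborel))"
      using A \<open>finite I\<close> by (auto intro!: sets_PiM_I_finite)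
    have "PiE I (\<lambda>_. S) \<inter> PiE I A = PiE I (\<lambda>i. S \<inter> A i)"
      by (auto simp: PiE_def Pi_def)
    then have "emeasure (uniform_measure (PiM I (\<lambda>_. lborel)) (PiE I (\<lambda>_. S))) (PiE I A)
        = emeasure (PiM I (\<lambda>_. lborel)) (PiE I (\<lambda>i. S \<inter> A i))
          / emeasure (PiM I (\<lambda>_. lborel)) (PiE I (\<lambda>_. S))"
      by (simp only: emeasure_uniform_measure[OF box])
    also have "\<dots> = (\<Prod>i\<in>I. emeasure lborel (S \<inter> A i)) * inverse ?m ^ card I"
    proof -
      have "emeasure (PiM I (\<lambda>_. lborel)) (PiE I (\<lambda>i. S \<inter> A i)) = (\<Prod>i\<in>I. emeasure lborel (S \<inter> A i))"
        using A \<open>finite I\<close> by (intro PL.emeasure_PiM) auto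
      moreover have "emeasure (PiM I (\<lambda>_. lborel)) (PiE I (\<lambda>_. S)) = ?m ^ card I"
        using \<open>finite I\<close> by (subst PL.emeasure_PiM) auto
      ultimately show ?thesis
        by (simp only: divide_ennreal_def ennreal_inverse_power)
    qed
    also have "\<dots> = (\<Prod>i\<in>I. emeasure lborel (S \<inter> A i) / ?m)"
      by (simp add: divide_ennreal_def prod.distrib)
    also have "\<dots> = (\<Prod>i\<in>I. emeasure (uniform_measure lborel S) (A i))"
      using A by (intro prod.cong) auto
    finally show "emeasure (uniform_measure (PiM I (\<lambda>_. lborel)) (PiE I (\<lambda>_. S))) (PiE I A)
        = (\<Prod>i\<in>I. emeasure (uniform_measure lborel S) (A i))" .
  qed (unfold sets_uniform_measure, rule sets_PiM_cong, simp_all)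
qed

(* Fubini over the k-th coordinate: every slice of the hyperplane is a single point. *)
lemma emeasure_PiM_sum_eq_null:
  fixes M :: "real measure"
  assumes "prob_space M" and sets_M [measurable_cong]: "sets M = sets borel"
    and no_atoms: "\<And>t. emeasure M {t} = 0" and "finite I" and "k \<in> I"
  shows "emeasure (PiM I (\<lambda>_. M)) {u \<in> space (PiM I (\<lambda>_. M)). (\<Sum>i\<in>I. u i) = c} = 0"
proof -
  interpret product_prob_space "\<lambda>_. M" by (rule product_prob_spaceI) fact
  define J where "J = I - {k}"
  have I: "I = insert k J" "k \<notin> J" "finite J" using assms unfolding J_def by auto
  define S where "S = {u \<in> space (PiM I (\<lambda>_. M)). (\<Sum>i\<in>I. u i) = c}"
  have S_sets [measurable]: "S \<in> sets (PiM I (\<lambda>_. M))"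
    unfolding S_def by measurable
  have slice_null: "(\<integral>\<^sup>+y. indicator S (x(k := y)) \<partial>M) = 0"
    if "x \<in> space (PiM J (\<lambda>_. M))" for x
  proof -
    have "x(k := y) \<in> space (PiM I (\<lambda>_. M))" for y
      using that I sets_eq_imp_space_eq[OF sets_M] by (auto simp: space_PiM PiE_def extensional_def)
    moreover have "(\<Sum>i\<in>I. (x(k := y)) i) = y + (\<Sum>i\<in>J. x i)" for y
      using I by (auto intro!: sum.cong)
    ultimately have "indicator S (x(k := y)) = (indicator {c - (\<Sum>i\<in>J. x i)} y :: ennreal)" for y
      unfolding S_def by (auto simp: indicator_def)
    then have "(\<integral>\<^sup>+y. indicator S (x(k := y)) \<partial>M) = (\<integral>\<^sup>+y. indicator {c - (\<Sum>i\<in>J. x i)} y \<partial>M)"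
      by simp
    also have "\<dots> = emeasure M {c - (\<Sum>i\<in>J. x i)}"
      by (rule nn_integral_indicator) (simp add: sets_M)
    finally show ?thesis
      by (simp only: no_atoms)
  qed
  have "emeasure (PiM I (\<lambda>_. M)) S = (\<integral>\<^sup>+u. indicator S u \<partial>PiM (insert k J) (\<lambda>_. M))"
    using S_sets by (simp only: I(1)[symmetric] nn_integral_indicator)
  also have "\<dots> = (\<integral>\<^sup>+x. (\<integral>\<^sup>+y. indicator S (x(k := y)) \<partial>M) \<partial>PiM J (\<lambda>_. M))"
    by (rule product_nn_integral_insert[OF I(3,2)]) (simp add: I(1)[symmetric])
  also have "\<dots> = (\<integral>\<^sup>+x. 0 \<partial>PiM J (\<lambda>_. M))"
    by (rule nn_integral_cong) (rule slice_null)
  finally show ?thesis unfolding S_def by simp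
qed

lemma measure_pair_measure_Times:
  assumes "sigma_finite_measure M2" and "A \<in> sets M1" and "B \<in> sets M2"
  shows "measure (M1 \<Otimes>\<^sub>M M2) (A \<times> B) = measure M1 A * measure M2 B"
proof -
  interpret M2: sigma_finite_measure M2 by fact
  show ?thesis
    using assms by (simp add: measure_def M2.emeasure_pair_measure_Times enn2real_mult)
qed

lemma measure_lessThan_add_greaterThan:
  fixes M :: "real measure"
  assumes "prob_space M" and sets_M: "sets M = sets borel" and "measure M {c} = 0"
  shows "measure M {..<c} + measure M {c<..} = 1"
proof -
  interpret prob_space M by fact
  have "measure M {..c} = measure M {..<c} + measure M {c}"
    by (subst finite_measure_Union[symmetric])
      (auto simp: sets_M intro!: arg_cong[where f = "measure M"])
  moreover have "measure M {c<..} = 1 - measure M {..c}"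
    using prob_compl[of "{..c}"] sets_eq_imp_space_eq[OF sets_M]
    by (simp add: sets_M Compl_eq_Diff_UNIV[symmetric])
  ultimately show ?thesis
    using \<open>measure M {c} = 0\<close> by simp
qed

section \<open>Irwin--Hall distributions\<close>

lemma prob_space_irwin_hall: "prob_space (irwin_hall n)"
  unfolding irwin_hall_def
  by (intro prob_space.prob_space_distr prob_space_PiM prob_space_uniform01) auto

lemma sets_irwin_hall [simp, measurable_cong]: "sets (irwin_hall n) = sets borel"
  by (simp add: irwin_hall_def)

lemma space_irwin_hall [simp]: "space (irwin_hall n) = UNIV"
  by (simp add: irwin_hall_def)

lemma AE_irwin_hall_range: "AE t in irwin_hall n. 0 \<le> t \<and> t \<le> real n"
proof -
  have "AE u in PiM {..<n} (\<lambda>_. uniform01). \<forall>i\<in>{..<n}. 0 \<le> u i \<and> u i \<le> 1"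
    by (intro AE_finite_allI AE_PiM_component prob_space_uniform01 AE_uniform_measureI) auto
  then have "AE u in PiM {..<n} (\<lambda>_. uniform01). 0 \<le> (\<Sum>i<n. u i) \<and> (\<Sum>i<n. u i) \<le> real n"
    by eventually_elim (use sum_bounded_above[of "{..<n}" _ "1::real"] in \<open>auto intro: sum_nonneg\<close>)
  then show ?thesis
    unfolding irwin_hall_def by (subst AE_distr_iff) auto
qed

lemma measure_irwin_hall_singleton:
  assumes "n \<noteq> 0"
  shows "measure (irwin_hall n) {c} = 0"
proof -
  have no_atoms: "emeasure uniform01 {t} = 0" for t
    by (simp add: emeasure_lborel_countable)
  have "emeasure (PiM {..<n} (\<lambda>_. uniform01))
      {u \<in> space (PiM {..<n} (\<lambda>_. uniform01)). (\<Sum>i\<in>{..<n}. u i) = c} = 0"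
    using assms by (intro emeasure_PiM_sum_eq_null prob_space_uniform01 no_atoms) auto
  then show ?thesis
    unfolding irwin_hall_def
    by (subst measure_distr) (auto simp: measure_def vimage_def Int_def conj_commute)
qed

lemma distr_irwin_hall_reflect: "distr (irwin_hall n) borel (\<lambda>t. real n - t) = irwin_hall n"
proof -
  let ?P = "PiM {..<n} (\<lambda>_. uniform01)"
  have "distr uniform01 uniform01 (\<lambda>t. 1 + (-1) * t) = uniform01"
    by (rule distr_uniform_measure_affine) (auto simp: image_iff intro!: bexI[where x = "1 - _"])
  then have reflect: "distr ?P ?P (compose {..<n} (\<lambda>t. 1 - t)) = ?P"
    by (subst distr_PiM_finite_prob_space') (auto simp: prob_space_uniform01)
  have [measurable]: "compose {..<n} (\<lambda>t. 1 - t) \<in> measurable ?P ?P"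
    unfolding compose_def
    by (intro measurable_restrict) (auto simp: measurable_cong_sets[OF refl sets_uniform_measure])
  have "distr (irwin_hall n) borel (\<lambda>t. real n - t) = distr ?P borel (\<lambda>u. real n - (\<Sum>i<n. u i))"
    unfolding irwin_hall_def by (subst distr_distr) (auto simp: comp_def)
  also have "\<dots> = distr ?P borel ((\<lambda>u. \<Sum>i<n. u i) \<circ> compose {..<n} (\<lambda>t. 1 - t))"
    by (rule distr_cong) (auto simp: compose_def sum_subtractf)
  also have "\<dots> = distr (distr ?P ?P (compose {..<n} (\<lambda>t. 1 - t))) borel (\<lambda>u. \<Sum>i<n. u i)"
    by (subst distr_distr) auto
  finally show ?thesis
    unfolding reflect irwin_hall_def .
qed

lemma measure_irwin_hall_half:
  assumes "n \<noteq> 0"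
  shows "measure (irwin_hall n) {real n / 2<..} = 1 / 2"
    and "measure (irwin_hall n) {..<real n / 2} = 1 / 2"
proof -
  let ?h = "real n / 2"
  have "(\<lambda>t. real n - t) -` {..<?h} \<inter> space (irwin_hall n) = {?h<..}"
    by auto
  then have "measure (distr (irwin_hall n) borel (\<lambda>t. real n - t)) {..<?h}
      = measure (irwin_hall n) {?h<..}"
    by (subst measure_distr) auto
  then have "measure (irwin_hall n) {..<?h} = measure (irwin_hall n) {?h<..}"
    by (simp only: distr_irwin_hall_reflect)
  moreover have "measure (irwin_hall n) {..<?h} + measure (irwin_hall n) {?h<..} = 1"
    using assms
    by (intro measure_lessThan_add_greaterThan prob_space_irwin_hall sets_irwin_hall
        measure_irwin_hall_singleton)
  ultimately show "measure (irwin_hall n) {?h<..} = 1 / 2" "measure (irwin_hall n) {..<?h} = 1 / 2"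
    by simp_all
qed

lemma distr_block_sums_irwin_hall:
  "distr (PiM {..<n + k} (\<lambda>_. uniform01)) (borel \<Otimes>\<^sub>M borel)
      (\<lambda>u. (\<Sum>i\<in>{n..<n + k}. u i, \<Sum>i<n. u i))
    = irwin_hall k \<Otimes>\<^sub>M irwin_hall n"
proof -
  interpret P: product_prob_space "\<lambda>_. uniform01"
    by (rule product_prob_spaceI) (rule prob_space_uniform01)
  define K where "K = {n..<n + k}"
  define J where "J = {..<n}"
  have KJ: "K \<inter> J = {}" "K \<union> J = {..<n + k}" "finite K" "finite J"
    unfolding K_def J_def by auto
  have reindex: "distr (PiM K (\<lambda>_. uniform01)) (PiM {..<k} (\<lambda>_. uniform01))
      (\<lambda>\<omega>. \<lambda>i\<in>{..<k}. \<omega> (n + i)) = PiM {..<k} (\<lambda>_. uniform01)"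
    using distr_PiM_reindex[of K "\<lambda>_. uniform01" "\<lambda>i. n + i" "{..<k}"] prob_space_uniform01
    by (auto simp: K_def inj_on_def)
  have "irwin_hall k = distr (distr (PiM K (\<lambda>_. uniform01)) (PiM {..<k} (\<lambda>_. uniform01))
      (\<lambda>\<omega>. \<lambda>i\<in>{..<k}. \<omega> (n + i))) borel (\<lambda>u. \<Sum>i<k. u i)"
    unfolding irwin_hall_def reindex ..
  also have "\<dots> = distr (PiM K (\<lambda>_. uniform01)) borel (\<lambda>u. \<Sum>i\<in>K. u i)"
    by (subst distr_distr) (auto simp: K_def sum.atLeastLessThan_shift_0[of _ n] atLeast0LessThan
        intro!: measurable_restrict distr_cong)
  finally have irwin_K: "irwin_hall k = distr (PiM K (\<lambda>_. uniform01)) borel (\<lambda>u. \<Sum>i\<in>K. u i)" .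
  have irwin_J: "irwin_hall n = distr (PiM J (\<lambda>_. uniform01)) borel (\<lambda>u. \<Sum>i\<in>J. u i)"
    unfolding irwin_hall_def J_def ..
  have "irwin_hall k \<Otimes>\<^sub>M irwin_hall n
      = distr (PiM K (\<lambda>_. uniform01) \<Otimes>\<^sub>M PiM J (\<lambda>_. uniform01)) (borel \<Otimes>\<^sub>M borel)
          (\<lambda>(x, y). (\<Sum>i\<in>K. x i, \<Sum>i\<in>J. y i))"
    using prob_space_imp_sigma_finite[OF prob_space_irwin_hall[of n, unfolded irwin_J]]
    unfolding irwin_K irwin_J by (intro pair_measure_distr) measurable
  also have "\<dots> = distr (PiM K (\<lambda>_. uniform01) \<Otimes>\<^sub>M PiM J (\<lambda>_. uniform01)) (borel \<Otimes>\<^sub>M borel)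
      ((\<lambda>u. (\<Sum>i\<in>K. u i, \<Sum>i\<in>J. u i)) \<circ> merge K J)"
    using KJ(1) by (intro distr_cong) (auto simp: space_pair_measure merge_def intro!: sum.cong)
  also have "\<dots> = distr (distr (PiM K (\<lambda>_. uniform01) \<Otimes>\<^sub>M PiM J (\<lambda>_. uniform01))
      (PiM (K \<union> J) (\<lambda>_. uniform01)) (merge K J)) (borel \<Otimes>\<^sub>M borel)
      (\<lambda>u. (\<Sum>i\<in>K. u i, \<Sum>i\<in>J. u i))"
    using measurable_merge[of K J "\<lambda>_. uniform01"] by (intro distr_distr[symmetric]) measurable
  also have "\<dots> = distr (PiM {..<n + k} (\<lambda>_. uniform01)) (borel \<Otimes>\<^sub>M borel)
      (\<lambda>u. (\<Sum>i\<in>K. u i, \<Sum>i\<in>J. u i))"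
    by (subst P.distr_merge[OF KJ(1,3,4)]) (simp only: KJ(2))
  finally show ?thesis
    unfolding K_def J_def ..
qed

abbreviation uniform01_sequence :: "(nat \<Rightarrow> real) measure" where
  "uniform01_sequence \<equiv> PiM UNIV (\<lambda>_::nat. uniform01)"

lemma irwin_hall_eq_distr_sequence:
  "irwin_hall n = distr uniform01_sequence borel (\<lambda>\<omega>. \<Sum>i<n. \<omega> i)"
proof -
  have "distr uniform01_sequence (PiM {..<n} (\<lambda>_. uniform01)) (\<lambda>\<omega>. \<lambda>i\<in>{..<n}. \<omega> i)
      = PiM {..<n} (\<lambda>_. uniform01)"
    using distr_PiM_reindex[of UNIV "\<lambda>_. uniform01" "\<lambda>i. i" "{..<n}"] prob_space_uniform01 by auto
  then have "irwin_hall n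
      = distr (distr uniform01_sequence (PiM {..<n} (\<lambda>_. uniform01)) (\<lambda>\<omega>. \<lambda>i\<in>{..<n}. \<omega> i))
          borel (\<lambda>u. \<Sum>i<n. u i)"
    by (simp add: irwin_hall_def)
  also have "\<dots> = distr uniform01_sequence borel (\<lambda>\<omega>. \<Sum>i<n. \<omega> i)"
    by (subst distr_distr) (auto intro!: measurable_restrict distr_cong)
  finally show ?thesis .
qed

lemma central_limit_theorem_uniform01:
  "weak_conv_m (\<lambda>n. distr uniform01_sequence borel
      (\<lambda>\<omega>. (\<Sum>i<n. \<omega> i - 1 / 2) / sqrt (real n * (sqrt (1 / 12))\<^sup>2))) std_normal_distribution"
proof -
  interpret P: product_prob_space "\<lambda>_::nat. uniform01" UNIV
    by (rule product_prob_spaceI) (rule prob_space_uniform01)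
  have component: "distr uniform01_sequence borel (\<lambda>\<omega>. \<omega> n) = uniform01" for n
    using P.PiM_component[of n] by (simp cong: distr_cong)
  have "distributed uniform01_sequence lborel (\<lambda>\<omega>. \<omega> n)
      (\<lambda>x. indicator {0..1} x / measure lborel {0..1::real})" for n
  proof -
    have "distr uniform01_sequence lborel (\<lambda>\<omega>. \<omega> n) = uniform01"
      using component[of n] by (simp cong: distr_cong)
    also have "\<dots> = density lborel (\<lambda>x. ennreal (indicator {0..1} x / measure lborel {0..1::real}))"
      unfolding uniform_measure_def by (intro density_cong) (auto split: split_indicator)
    finally show ?thesis
      unfolding distributed_def by auto
  qed
  note uniform_moments =
    P.uniform_distributed_expectation[OF this] P.uniform_distributed_variance[OF this]
  show ?thesis
  proof (rule P.central_limit_theorem[where \<mu> = uniform01])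
    have "distr uniform01_sequence (PiM UNIV (\<lambda>_. borel)) (\<lambda>\<omega>. \<lambda>i\<in>UNIV. \<omega> i)
        = distr uniform01_sequence uniform01_sequence (\<lambda>\<omega>. \<omega>)"
      by (rule distr_cong) (auto simp: space_PiM intro!: sets_PiM_cong)
    then show "P.indep_vars (\<lambda>_. borel) (\<lambda>n \<omega>. \<omega> n) UNIV"
      by (subst P.indep_vars_iff_distr_eq_PiM) (auto simp: component)
    show "integrable uniform01_sequence (\<lambda>\<omega>. (\<omega> n)\<^sup>2)" for n
    proof (rule P.integrable_const_bound[where B = 1])
      have "AE \<omega> in uniform01_sequence. \<omega> n \<in> {0..1}"
        by (rule P.AE_component) (auto intro: AE_uniform_measureI)
      then show "AE \<omega> in uniform01_sequence. norm ((\<omega> n)\<^sup>2) \<le> 1"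
        by eventually_elim (auto simp: abs_square_le_1)
    qed auto
  qed (use uniform_moments component in auto)
qed

lemma weak_conv_m_shrinking_Icc_tendsto_0:
  fixes \<mu> :: "nat \<Rightarrow> real measure" and r :: "nat \<Rightarrow> real"
  assumes "weak_conv_m \<mu> \<nu>" and distr_\<mu>: "\<And>n. real_distribution (\<mu> n)"
    and cont: "\<And>x. isCont (cdf \<nu>) x" and "r \<longlonglongrightarrow> 0"
  shows "(\<lambda>n. measure (\<mu> n) {- r n .. r n}) \<longlonglongrightarrow> 0"
proof (rule order_tendstoI)
  fix y :: real assume "y < 0"
  then show "\<forall>\<^sub>F n in sequentially. y < measure (\<mu> n) {- r n .. r n}"
    by (simp add: less_le_trans[OF _ measure_nonneg])
next
  fix y :: real assume "0 < y"
  then have "y / 6 > 0" by simp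
  from cont[of 0, unfolded continuous_at_eps_delta, rule_format, OF this]
  obtain \<delta> where "\<delta> > 0" and \<delta>: "\<And>x. dist x 0 < \<delta> \<Longrightarrow> dist (cdf \<nu> x) (cdf \<nu> 0) < y / 6"
    by blast
  define e where "e = \<delta> / 2"
  have "e > 0" and small: "cdf \<nu> e - cdf \<nu> (- e) < y / 3"
    using \<delta>[of e] \<delta>[of "- e"] \<open>\<delta> > 0\<close> unfolding e_def dist_real_def abs_less_iff by auto
  have conv: "(\<lambda>n. cdf (\<mu> n) x) \<longlonglongrightarrow> cdf \<nu> x" for x
    using assms(1) cont unfolding weak_conv_m_def weak_conv_def by blast
  have "\<forall>\<^sub>F n in sequentially. \<bar>cdf (\<mu> n) x - cdf \<nu> x\<bar> < y / 3" for x
    using conv[of x, THEN tendstoD, of "y / 3"] \<open>0 < y\<close> by (simp add: dist_real_def)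
  moreover have "\<forall>\<^sub>F n in sequentially. \<bar>r n\<bar> < e"
    using \<open>r \<longlonglongrightarrow> 0\<close>[THEN tendstoD, OF \<open>e > 0\<close>] by (simp add: dist_real_def)
  ultimately have "\<forall>\<^sub>F n in sequentially. \<bar>cdf (\<mu> n) e - cdf \<nu> e\<bar> < y / 3
      \<and> \<bar>cdf (\<mu> n) (- e) - cdf \<nu> (- e)\<bar> < y / 3 \<and> \<bar>r n\<bar> < e"
    by (intro eventually_conj)
  then show "\<forall>\<^sub>F n in sequentially. measure (\<mu> n) {- r n .. r n} < y"
  proof eventually_elim
    case (elim n)
    interpret real_distribution "\<mu> n" by (rule distr_\<mu>)
    have "measure (\<mu> n) {- r n .. r n} \<le> measure (\<mu> n) {- e<..e}"
      using elim by (intro finite_measure_mono) auto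
    also have "\<dots> = cdf (\<mu> n) e - cdf (\<mu> n) (- e)"
      using \<open>e > 0\<close> by (simp add: cdf_diff_eq)
    also have "\<dots> < y"
      using elim small by linarith
    finally show ?case .
  qed
qed

lemma isCont_cdf_std_normal: "isCont (cdf std_normal_distribution) x"
proof -
  interpret real_distribution std_normal_distribution by (rule real_dist_normal_dist)
  have "emeasure std_normal_distribution {x}
      = (\<integral>\<^sup>+t. ennreal (std_normal_density t) * indicator {x} t \<partial>lborel)"
    by (subst emeasure_density) auto
  also have "\<dots> = 0"
    by (rule nn_integral_null_set) (auto intro: countable_imp_null_set_lborel)
  finally show ?thesis
    by (simp add: isCont_cdf measure_def)
qed

lemma irwin_hall_window_tendsto_0:
  "(\<lambda>n. measure (irwin_hall n) {real n / 2 - a .. real n / 2 + a}) \<longlonglongrightarrow> 0"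
proof -
  interpret P: product_prob_space "\<lambda>_::nat. uniform01" UNIV
    by (rule product_prob_spaceI) (rule prob_space_uniform01)
  define c where "c n = sqrt (real n * (sqrt (1 / 12))\<^sup>2)" for n
  define \<mu> where "\<mu> n = distr uniform01_sequence borel (\<lambda>\<omega>. (\<Sum>i<n. \<omega> i - 1 / 2) / c n)" for n
  have "real_distribution (\<mu> n)" for n
  proof -
    interpret prob_space "\<mu> n" unfolding \<mu>_def by (rule P.prob_space_distr) simp
    show ?thesis by unfold_locales (simp add: \<mu>_def)
  qed
  moreover have "(\<lambda>n. a / c n) \<longlonglongrightarrow> 0"
  proof -
    have "(\<lambda>n. a * sqrt (12 / real n)) \<longlonglongrightarrow> a * sqrt 0"
      by (intro tendsto_intros)
    moreover have "a / c n = a * sqrt (12 / real n)" for n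
      by (simp add: c_def real_sqrt_divide power_divide)
    ultimately show ?thesis by simp
  qed
  ultimately have lim: "(\<lambda>n. measure (\<mu> n) {- (a / c n) .. a / c n}) \<longlonglongrightarrow> 0"
    using central_limit_theorem_uniform01 isCont_cdf_std_normal unfolding \<mu>_def c_def
    by (intro weak_conv_m_shrinking_Icc_tendsto_0) auto
  have window_eq: "measure (\<mu> n) {- (a / c n) .. a / c n}
      = measure (irwin_hall n) {real n / 2 - a .. real n / 2 + a}" if "n > 0" for n
  proof -
    have "c n > 0" using that by (simp add: c_def)
    then have "- (a / c n) \<le> t / c n \<and> t / c n \<le> a / c n \<longleftrightarrow> - a \<le> t \<and> t \<le> a" for t
      by (auto simp: field_simps)
    then have "(\<lambda>\<omega>. (\<Sum>i<n. \<omega> i - 1 / 2) / c n) -` {- (a / c n) .. a / c n}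
        = (\<lambda>\<omega>. \<Sum>i<n. \<omega> i) -` {real n / 2 - a .. real n / 2 + a}"
      by (auto simp: sum_subtractf)
    then show ?thesis
      unfolding irwin_hall_eq_distr_sequence \<mu>_def by (simp add: measure_distr)
  qed
  have "\<forall>\<^sub>F n in sequentially. measure (\<mu> n) {- (a / c n) .. a / c n}
      = measure (irwin_hall n) {real n / 2 - a .. real n / 2 + a}"
    using eventually_gt_at_top[of "0::nat"] by eventually_elim (rule window_eq)
  with lim show ?thesis
    by (rule Lim_transform_eventually)
qed

section \<open>The limit of P_d\<close>

lemma sets_opposite_sign_regions [measurable]:
  "{p :: real \<times> real. fst p > 1 \<and> snd p < c + 1 - fst p} \<in> sets (borel \<Otimes>\<^sub>M borel)"
  "{p :: real \<times> real. fst p < 1 \<and> snd p > c + 1 - fst p} \<in> sets (borel \<Otimes>\<^sub>M borel)"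
proof -
  have "{p \<in> space (borel \<Otimes>\<^sub>M borel). fst p > 1 \<and> snd p < c + 1 - fst p} \<in> sets (borel \<Otimes>\<^sub>M borel)"
    "{p \<in> space (borel \<Otimes>\<^sub>M borel). fst p < 1 \<and> snd p > c + 1 - fst p} \<in> sets (borel \<Otimes>\<^sub>M borel)"
    by measurable
  then show "{p :: real \<times> real. fst p > 1 \<and> snd p < c + 1 - fst p} \<in> sets (borel \<Otimes>\<^sub>M borel)"
    "{p :: real \<times> real. fst p < 1 \<and> snd p > c + 1 - fst p} \<in> sets (borel \<Otimes>\<^sub>M borel)"
    by (simp_all add: space_pair_measure)
qed

lemma opposite_sign_regions_measure_bound:
  fixes X Y :: "real measure" and c :: real
  assumes "prob_space X" and "prob_space Y"
    and sets_X [measurable_cong]: "sets X = sets borel"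
    and sets_Y [measurable_cong]: "sets Y = sets borel"
    and X_above: "measure X {1<..} = 1 / 2" and X_below: "measure X {..<1} = 1 / 2"
    and X_range: "AE x in X. 0 \<le> x \<and> x \<le> 2" and Y_atom: "measure Y {c} = 0"
  shows "\<bar>measure (X \<Otimes>\<^sub>M Y) {p. fst p > 1 \<and> snd p < c + 1 - fst p}
          + measure (X \<Otimes>\<^sub>M Y) {p. fst p < 1 \<and> snd p > c + 1 - fst p} - 1 / 2\<bar>
         \<le> measure Y {c - 1 .. c + 1}"
proof -
  interpret X: prob_space X by fact
  interpret Y: prob_space Y by fact
  interpret XY: pair_prob_space X Y ..
  let ?\<nu> = "measure (X \<Otimes>\<^sub>M Y)"
  have space_X: "space X = UNIV"
    using sets_eq_imp_space_eq[OF sets_X] by simp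
  have Times [simp]: "?\<nu> (A \<times> B) = measure X A * measure Y B"
    if "A \<in> sets borel" "B \<in> sets borel" for A B
    using that by (simp add: measure_pair_measure_Times Y.sigma_finite_measure_axioms sets_X sets_Y)
  \<comment> \<open>The regions lie in F, of measure 1/2, and outside N \<union> D they fill it.\<close>
  define W1 where "W1 = {p :: real \<times> real. fst p > 1 \<and> snd p < c + 1 - fst p}"
  define W2 where "W2 = {p :: real \<times> real. fst p < 1 \<and> snd p > c + 1 - fst p}"
  define F :: "(real \<times> real) set" where "F = {1<..} \<times> {..<c} \<union> {..<1} \<times> {c<..}"
  define N :: "(real \<times> real) set" where "N = (- {0..2}) \<times> UNIV"
  define D :: "(real \<times> real) set" where "D = UNIV \<times> {c - 1 .. c + 1}"
  have sets_XY: "sets (X \<Otimes>\<^sub>M Y) = sets (borel \<Otimes>\<^sub>M borel)"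
    by (rule sets_pair_measure_cong[OF sets_X sets_Y])
  have "W1 \<in> sets (X \<Otimes>\<^sub>M Y)" "W2 \<in> sets (X \<Otimes>\<^sub>M Y)"
    unfolding sets_XY W1_def W2_def by (rule sets_opposite_sign_regions)+
  moreover have "F \<in> sets (X \<Otimes>\<^sub>M Y)" "N \<in> sets (X \<Otimes>\<^sub>M Y)" "D \<in> sets (X \<Otimes>\<^sub>M Y)"
    unfolding sets_XY F_def N_def D_def by (auto intro!: pair_measureI)
  ultimately have [measurable]: "W1 \<in> sets (X \<Otimes>\<^sub>M Y)" "W2 \<in> sets (X \<Otimes>\<^sub>M Y)"
    "F \<in> sets (X \<Otimes>\<^sub>M Y)" "N \<in> sets (X \<Otimes>\<^sub>M Y)" "D \<in> sets (X \<Otimes>\<^sub>M Y)"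
    by simp_all
  have "?\<nu> F = ?\<nu> ({1<..} \<times> {..<c}) + ?\<nu> ({..<1} \<times> {c<..})"
    unfolding F_def by (rule XY.finite_measure_Union) auto
  then have "?\<nu> F = 1 / 2"
    using measure_lessThan_add_greaterThan[OF \<open>prob_space Y\<close> sets_Y Y_atom] X_above X_below
    by (simp add: field_simps)
  moreover have "?\<nu> (W1 \<union> W2) = ?\<nu> W1 + ?\<nu> W2"
    by (rule XY.finite_measure_Union) (measurable, auto simp: W1_def W2_def)
  moreover have "W1 \<union> W2 \<subseteq> F"
    by (auto simp: W1_def W2_def F_def)
  then have "?\<nu> (W1 \<union> W2) \<le> ?\<nu> F" and "?\<nu> (F - (W1 \<union> W2)) = ?\<nu> F - ?\<nu> (W1 \<union> W2)"
    by (auto intro!: XY.finite_measure_mono XY.finite_measure_Diff)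
  moreover have "?\<nu> (F - (W1 \<union> W2)) \<le> measure Y {c - 1 .. c + 1}"
  proof -
    have "F - (W1 \<union> W2) \<subseteq> N \<union> D"
      by (auto simp: W1_def W2_def F_def N_def D_def)
    then have "?\<nu> (F - (W1 \<union> W2)) \<le> ?\<nu> (N \<union> D)"
      by (rule XY.finite_measure_mono) measurable
    also have "\<dots> \<le> ?\<nu> N + ?\<nu> D"
      by (rule measure_Un_le) measurable
    finally have "?\<nu> (F - (W1 \<union> W2)) \<le> ?\<nu> N + ?\<nu> D" .
    moreover have "measure X (- {0..2}) = 0"
      using X_range by (subst X.prob_eq_0) auto
    ultimately show ?thesis
      using X.prob_space by (simp add: N_def D_def space_X)
  qed
  ultimately show ?thesis
    unfolding W1_def[symmetric] W2_def[symmetric] by (simp add: abs_le_iff)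
qed

lemma P_d_tendsto_half: "P_d \<longlonglongrightarrow> 1 / 2"
proof -
  have window: "(\<lambda>d. measure (irwin_hall (2 * d)) {real d - 1 .. real d + 1}) \<longlonglongrightarrow> 0"
    using LIMSEQ_subseq_LIMSEQ[OF irwin_hall_window_tendsto_0[of 1], of "\<lambda>d. 2 * d"]
    by (simp add: strict_mono_def comp_def)
  have bound: "\<bar>P_d d - 1 / 2\<bar> \<le> measure (irwin_hall (2 * d)) {real d - 1 .. real d + 1}"
    if "d \<ge> 1" for d
    using measure_irwin_hall_half[of 2] AE_irwin_hall_range[of 2] that
    unfolding P_d_def
    by (intro opposite_sign_regions_measure_bound prob_space_irwin_hall
        measure_irwin_hall_singleton) auto
  have "\<forall>\<^sub>F d in sequentially. norm (P_d d - 1 / 2)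
      \<le> measure (irwin_hall (2 * d)) {real d - 1 .. real d + 1}"
    using eventually_ge_at_top[of "1::nat"] by eventually_elim (simp add: bound)
  from Lim_null_comparison[OF this window] show ?thesis
    by (simp add: LIM_zero_iff)
qed

section \<open>Rescaling the parameter cube\<close>

lemma U_H_eq: "U_H d x = alphaH d x - alphaK d x"
  by (simp add: U_H_def muK_def)

lemma U_K_minus_U_H: "U_K d x - U_H d x = (\<Sum>i<d. betaH d x i - betaK d x i)"
  by (simp add: U_H_def U_K_def muK_def muH_def)

lemma measurable_U_H_U_K [measurable]:
  "U_H d \<in> borel_measurable (lebesgue_R (2 * d + 2))"
  "U_K d \<in> borel_measurable (lebesgue_R (2 * d + 2))"
proof -
  have component: "(\<lambda>x. x i) \<in> borel_measurable (lebesgue_R (2 * d + 2))" if "i < 2 * d + 2" for i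
    using that by (simp add: lebesgue_R_def)
  have "U_H d = (\<lambda>x. x (2 * d + 1) - x (2 * d))"
    by (simp add: fun_eq_iff U_H_eq alphaH_def alphaK_def)
  moreover have "U_K d = (\<lambda>x. (\<Sum>i<d. x (d + i) - x i) + (x (2 * d + 1) - x (2 * d)))"
    by (simp add: fun_eq_iff U_K_def muH_def alphaH_def alphaK_def betaH_def betaK_def)
  ultimately show "U_H d \<in> borel_measurable (lebesgue_R (2 * d + 2))"
    "U_K d \<in> borel_measurable (lebesgue_R (2 * d + 2))"
    by (simp_all only:)
      (intro borel_measurable_add borel_measurable_sum borel_measurable_diff component; simp)+
qed

(* The indices i < d and i = 2 d are those of beta_K and alpha_K, which get reflected. *)
definition cube_slope :: "nat \<Rightarrow> real \<Rightarrow> nat \<Rightarrow> real" where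
  "cube_slope d M i = (if i < d \<or> i = 2 * d then - 1 else 1) / (2 * M)"

definition rescaled_unexplained :: "nat \<Rightarrow> real \<Rightarrow> (nat \<Rightarrow> real) \<Rightarrow> real \<times> real" where
  "rescaled_unexplained d M x = (1 + U_H d x / (2 * M), real d + (U_K d x - U_H d x) / (2 * M))"

lemma block_sums_cube_slope:
  assumes "M > 0"
  shows "(\<Sum>i\<in>{2 * d..<2 * d + 2}. 1 / 2 + cube_slope d M i * x i) = 1 + U_H d x / (2 * M)"
    and "(\<Sum>i<2 * d. 1 / 2 + cube_slope d M i * x i) = real d + (U_K d x - U_H d x) / (2 * M)"
proof -
  have "{2 * d..<2 * d + 2} = {2 * d, 2 * d + 1}" by auto
  then show "(\<Sum>i\<in>{2 * d..<2 * d + 2}. 1 / 2 + cube_slope d M i * x i) = 1 + U_H d x / (2 * M)"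
    using assms by (simp add: cube_slope_def U_H_eq alphaH_def alphaK_def field_simps)
  have "(\<Sum>i<2 * d. 1 / 2 + cube_slope d M i * x i)
      = (\<Sum>i<d. 1 / 2 + cube_slope d M i * x i) + (\<Sum>i<d. 1 / 2 + cube_slope d M (d + i) * x (d + i))"
    using sum.atLeastLessThan_concat[of 0 d "2 * d" "\<lambda>i. 1 / 2 + cube_slope d M i * x i"]
      sum.atLeastLessThan_shift_0[of "\<lambda>i. 1 / 2 + cube_slope d M i * x i" d "2 * d"]
    by (simp add: atLeast0LessThan comp_def mult_2)
  also have "\<dots> = (\<Sum>i<d. 1 + (x (d + i) - x i) / (2 * M))"
    unfolding sum.distrib[symmetric] using assms
    by (intro sum.cong refl) (simp add: cube_slope_def field_simps)
  also have "\<dots> = real d + (U_K d x - U_H d x) / (2 * M)"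
    by (simp add: U_K_minus_U_H sum.distrib sum_divide_distrib betaH_def betaK_def)
  finally show "(\<Sum>i<2 * d. 1 / 2 + cube_slope d M i * x i)
      = real d + (U_K d x - U_H d x) / (2 * M)" .
qed

lemma distr_uniform_cube_rescaled_unexplained:
  assumes "M > 0"
  shows "distr (uniform_measure (lebesgue_R (2 * d + 2)) (cube_CM d M)) (borel \<Otimes>\<^sub>M borel)
      (rescaled_unexplained d M) = irwin_hall 2 \<Otimes>\<^sub>M irwin_hall (2 * d)"
proof -
  let ?I = "{..<2 * d + 2}"
  let ?G = "\<lambda>x. \<lambda>i\<in>?I. 1 / 2 + cube_slope d M i * x i"
  let ?B = "\<lambda>u. (\<Sum>i\<in>{2 * d..<2 * d + 2}. u i, \<Sum>i<2 * d. u i)"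
  let ?Cube = "PiM ?I (\<lambda>_. uniform_measure lborel {- M..M})"
  let ?Unit = "PiM ?I (\<lambda>_. uniform01)"
  have cube: "uniform_measure (lebesgue_R (2 * d + 2)) (cube_CM d M) = ?Cube"
    unfolding lebesgue_R_def cube_CM_def using assms by (intro uniform_measure_PiE_const) auto
  have "(\<lambda>t. 1 / 2 + cube_slope d M i * t) ` {- M..M} = {0..1}" for i
  proof -
    have "(\<lambda>t. 1 / 2 + cube_slope d M i * t) = (\<lambda>t. cube_slope d M i * t + 1 / 2)"
      by (auto simp: fun_eq_iff)
    then show ?thesis
      using assms
      by (simp only: image_affinity_atLeastAtMost) (auto simp: cube_slope_def field_simps)
  qed
  then have to_unit_cube: "distr ?Cube ?Unit ?G = ?Unit"
    using assms
    by (intro distr_PiM_componentwise prob_space_uniform01 prob_space_uniform_measure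
        distr_uniform_measure_affine)
      (auto simp: cube_slope_def field_simps
        measurable_cong_sets[OF sets_uniform_measure sets_uniform_measure])
  have pointwise: "(?B \<circ> ?G) x = rescaled_unexplained d M x" for x
  proof -
    have "(\<Sum>i\<in>{2 * d..<2 * d + 2}. ?G x i)
        = (\<Sum>i\<in>{2 * d..<2 * d + 2}. 1 / 2 + cube_slope d M i * x i)"
      and "(\<Sum>i<2 * d. ?G x i) = (\<Sum>i<2 * d. 1 / 2 + cube_slope d M i * x i)"
      by (auto intro!: sum.cong)
    then show ?thesis
      by (simp only: comp_def rescaled_unexplained_def block_sums_cube_slope[OF assms])
  qed
  have "distr ?Cube (borel \<Otimes>\<^sub>M borel) (rescaled_unexplained d M)
      = distr ?Cube (borel \<Otimes>\<^sub>M borel) (?B \<circ> ?G)"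
    by (rule distr_cong[OF refl refl]) (rule pointwise[symmetric])
  also have "\<dots> = distr (distr ?Cube ?Unit ?G) (borel \<Otimes>\<^sub>M borel) ?B"
    by (rule distr_distr[symmetric]) (auto intro!: measurable_restrict
        simp: measurable_cong_sets[OF refl sets_uniform_measure])
  also have "\<dots> = distr ?Unit (borel \<Otimes>\<^sub>M borel) ?B"
    by (simp only: to_unit_cube)
  also have "\<dots> = irwin_hall 2 \<Otimes>\<^sub>M irwin_hall (2 * d)"
    by (rule distr_block_sums_irwin_hall)
  finally show ?thesis
    unfolding cube .
qed

lemma measurable_rescaled_unexplained [measurable]:
  "rescaled_unexplained d M \<in> measurable (lebesgue_R (2 * d + 2)) (borel \<Otimes>\<^sub>M borel)"
  unfolding rescaled_unexplained_def by measurable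

lemma rescaled_unexplained_opposite_sign_iff:
  assumes "M > 0"
  shows "rescaled_unexplained d M x \<in> {p. fst p > 1 \<and> snd p < real d + 1 - fst p}
      \<longleftrightarrow> U_H d x > 0 \<and> U_K d x < 0"
    and "rescaled_unexplained d M x \<in> {p. fst p < 1 \<and> snd p > real d + 1 - fst p}
      \<longleftrightarrow> U_H d x < 0 \<and> U_K d x > 0"
  using assms
  by (auto simp: rescaled_unexplained_def field_simps zero_less_mult_iff mult_less_0_iff)

lemma emeasure_cube_CM:
  assumes "M > 0"
  shows "emeasure (lebesgue_R (2 * d + 2)) (cube_CM d M) = ennreal ((2 * M) ^ (2 * d + 2))"
proof -
  interpret product_sigma_finite "\<lambda>_. lborel :: real measure" ..
  have "emeasure (lebesgue_R (2 * d + 2)) (cube_CM d M) = (\<Prod>i<2 * d + 2. emeasure lborel {- M..M})"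
    unfolding lebesgue_R_def cube_CM_def by (subst emeasure_PiM) auto
  also have "\<dots> = ennreal (2 * M) ^ (2 * d + 2)"
    using assms by simp
  also have "\<dots> = ennreal ((2 * M) ^ (2 * d + 2))"
    by (rule ennreal_power) (use assms in simp)
  finally show ?thesis .
qed

lemma opposite_sign_fraction_eq_P_d:
  assumes "M > 0"
  shows "measure (lebesgue_R (2 * d + 2)) (opposite_sign_set d M)
      / measure (lebesgue_R (2 * d + 2)) (cube_CM d M) = P_d d"
proof -
  let ?L = "lebesgue_R (2 * d + 2)" and ?C = "cube_CM d M"
  let ?U = "uniform_measure ?L ?C"
  let ?\<nu> = "irwin_hall 2 \<Otimes>\<^sub>M irwin_hall (2 * d)"
  define V where "V = {p. fst p > 1 \<and> snd p < real d + 1 - fst p}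
    \<union> {p. fst p < 1 \<and> snd p > real d + 1 - fst p}"
  have [measurable]: "V \<in> sets (borel \<Otimes>\<^sub>M borel)"
    unfolding V_def by measurable
  have C_sets: "?C \<in> sets ?L"
    unfolding cube_CM_def lebesgue_R_def by (intro sets_PiM_I_finite) auto
  have C_finite: "emeasure ?L ?C \<noteq> 0" "emeasure ?L ?C \<noteq> \<infinity>"
    using emeasure_cube_CM[OF assms, of d] assms by simp_all
  have [measurable]: "opposite_sign_set d M \<in> sets ?L"
  proof -
    have "opposite_sign_set d M
        = ?C \<inter> {x \<in> space ?L. (U_H d x < 0 \<and> U_K d x > 0) \<or> (U_H d x > 0 \<and> U_K d x < 0)}"
      using sets.sets_into_space[OF C_sets] by (auto simp: opposite_sign_set_def)
    also have "\<dots> \<in> sets ?L"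
      using C_sets by measurable
    finally show ?thesis .
  qed
  have "rescaled_unexplained d M -` V \<inter> space ?L \<in> sets ?L"
    by measurable
  moreover have "?C \<inter> (rescaled_unexplained d M -` V \<inter> space ?L) = opposite_sign_set d M"
    using rescaled_unexplained_opposite_sign_iff[OF assms] sets.sets_into_space[OF C_sets]
    by (auto simp: V_def opposite_sign_set_def)
  ultimately have "measure ?L (opposite_sign_set d M) / measure ?L ?C
      = measure ?U (rescaled_unexplained d M -` V \<inter> space ?U)"
    using measure_uniform_measure[OF C_finite] by simp
  also have "\<dots> = measure (distr ?U (borel \<Otimes>\<^sub>M borel) (rescaled_unexplained d M)) V"
    using measurable_rescaled_unexplained
    by (intro measure_distr[symmetric])
      (simp_all only: measurable_cong_sets[OF sets_uniform_measure refl] \<open>V \<in> _\<close>)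
  also have "\<dots> = measure ?\<nu> V"
    by (simp only: distr_uniform_cube_rescaled_unexplained[OF assms])
  also have "\<dots> = P_d d"
  proof -
    interpret prob_space ?\<nu>
      by (intro prob_space_pair prob_space_irwin_hall)
    show ?thesis
      unfolding P_d_def V_def
      by (rule finite_measure_Union)
        (auto simp: sets_pair_measure_cong[OF sets_irwin_hall sets_irwin_hall])
  qed
  finally show ?thesis .
qed

theorem mainTheorem3:
  shows "(\<forall>(d::nat) (M::real). d \<ge> 1 \<and> M > 0 \<longrightarrow>
            measure (lebesgue_R (2 * d + 2)) (opposite_sign_set d M)
              / measure (lebesgue_R (2 * d + 2)) (cube_CM d M) = P_d d)
         \<and> (P_d \<longlonglongrightarrow> 1 / 2)"
  using opposite_sign_fraction_eq_P_d P_d_tendsto_half by blast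

end
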